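(* Let $n\ge 2$, and let $S$ be a semitransitive subsemigroup of $\mathcal{I}_n\setminus\mathcal{S}_n$ with $|S|\le 2n$, with transitivity blocks $X_1,\dots,X_m$. For any $x,y$ belonging to the same transitivity block there is $\alpha\in S$ which has an arrow $x\to y$ and has no arrow from $X_p$ to $X_q$ with $p\neq q$.
   Context: $\mathcal{I}_n$ denotes the symmetric inverse semigroup of all partial injective maps of $X=\{1,\dots,n\}$ to itself (including the empty map $0$), with maps written on the right and composed left to right. $\mathcal{S}_n$ is the symmetric group on $X$. A semigroup $S$ of partial transformations of $X$ is semitransitive if for all $x,y\in X$ there is $\varphi\in S$ with $x\varphi=y$ or $y\varphi=x$. For $x,y\in X$ write $x\ge y$ if $x\varphi=y$ for some $\varphi\in S$; for semitransitive $S$ this is a total preorder. The transitivity blocks $X_1,\dots,X_m$ are the equivalence classes of this preorder (i.e. $x,y$ in the same block iff $x\ge y$ and $y\ge x$), numbered so that for $x\in X_i$, $y\in X_j$ one has $x\ge y$ iff $i\le j$. An element $\alpha\in S$ has an arrow $x\to y$ if $x\in\mathrm{dom}(\alpha)$ and $x\alpha=y$; the arrow is from block $X_p$ to block $X_q$ if $x\in X_p$, $y\in X_q$. *)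

theory Defs
  imports Main
begin

text \<open>Partial maps of X = {1..n} are modelled as maps nat \<rightharpoonup> nat.
  Maps are written on the right and composed left to right:
  x (alpha beta) = (x alpha) beta, i.e. alpha then beta.\<close>

definition pcomp :: "(nat \<rightharpoonup> nat) \<Rightarrow> (nat \<rightharpoonup> nat) \<Rightarrow> (nat \<rightharpoonup> nat)" where
  "pcomp \<alpha> \<beta> = \<beta> \<circ>\<^sub>m \<alpha>"

definition sym_inv :: "nat \<Rightarrow> (nat \<rightharpoonup> nat) set" where
  "sym_inv n = {\<alpha>. dom \<alpha> \<subseteq> {1..n} \<and> ran \<alpha> \<subseteq> {1..n} \<and> inj_on \<alpha> (dom \<alpha>)}"

definition sym_grp :: "nat \<Rightarrow> (nat \<rightharpoonup> nat) set" where
  "sym_grp n = {\<alpha>. \<alpha> \<in> sym_inv n \<and> dom \<alpha> = {1..n} \<and> ran \<alpha> = {1..n}}"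

definition subsemigroup :: "(nat \<rightharpoonup> nat) set \<Rightarrow> bool" where
  "subsemigroup S \<longleftrightarrow> (\<forall>\<alpha>\<in>S. \<forall>\<beta>\<in>S. pcomp \<alpha> \<beta> \<in> S)"

definition semitransitive :: "nat \<Rightarrow> (nat \<rightharpoonup> nat) set \<Rightarrow> bool" where
  "semitransitive n S \<longleftrightarrow>
     (\<forall>x\<in>{1..n}. \<forall>y\<in>{1..n}. \<exists>\<phi>\<in>S. \<phi> x = Some y \<or> \<phi> y = Some x)"

definition reach :: "(nat \<rightharpoonup> nat) set \<Rightarrow> nat \<Rightarrow> nat \<Rightarrow> bool" where
  "reach S x y \<longleftrightarrow> (\<exists>\<phi>\<in>S. \<phi> x = Some y)"

definition same_block :: "(nat \<rightharpoonup> nat) set \<Rightarrow> nat \<Rightarrow> nat \<Rightarrow> bool" where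
  "same_block S x y \<longleftrightarrow> reach S x y \<and> reach S y x"

end

theory Submission
  imports Defs
begin

(*
  Let x, y lie in one transitivity block, say beta x = y and
  gamma y = x with beta, gamma in S, and put psi = beta gamma, so psi fixes x.
  Take alpha = psi^(n+1) beta.  Then x alpha = y.  If u alpha = v, the point u
  survives n+1 applications of the injective partial map psi on {1..n}; by the
  pigeonhole principle its psi-orbit repeats, and by injectivity it is a cycle
  through u.  Hence some further power psi^j brings (u psi^(n+2)) = v gamma back
  to u, i.e. v (gamma psi^j) = u, and u, v lie in the same block.
*)

fun iter :: "(nat \<rightharpoonup> nat) \<Rightarrow> nat \<Rightarrow> nat \<Rightarrow> nat option" where
  "iter \<psi> 0 u = Some u"
| "iter \<psi> (Suc k) u = Option.bind (iter \<psi> k u) \<psi>"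

fun pw :: "(nat \<rightharpoonup> nat) \<Rightarrow> nat \<Rightarrow> (nat \<rightharpoonup> nat)" where
  "pw \<psi> 0 = \<psi>"
| "pw \<psi> (Suc k) = pcomp (pw \<psi> k) \<psi>"

lemma map_comp_bind: "(f \<circ>\<^sub>m g) u = Option.bind (g u) f"
  by (cases "g u") auto

lemma pcomp_apply: "pcomp \<alpha> \<beta> u = Option.bind (\<alpha> u) \<beta>"
  by (simp add: pcomp_def map_comp_bind)

lemma pw_iter: "pw \<psi> k = iter \<psi> (Suc k)"
proof (induction k)
  case (Suc k)
  then show ?case by (simp add: fun_eq_iff pcomp_apply)
qed (simp add: fun_eq_iff)

lemma pw_in: "subsemigroup S \<Longrightarrow> \<psi> \<in> S \<Longrightarrow> pw \<psi> k \<in> S"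
  by (induction k) (auto simp: subsemigroup_def)

lemma iter_add: "iter \<psi> (a + b) u = Option.bind (iter \<psi> a u) (iter \<psi> b)"
  by (induction b) (auto simp: bind_assoc)

lemma iter_fixpoint: "\<psi> x = Some x \<Longrightarrow> iter \<psi> k x = Some x"
  by (induction k) auto

lemma iter_prefix_defined:
  assumes "iter \<psi> k u \<noteq> None" "i \<le> k"
  shows "iter \<psi> i u \<noteq> None"
  using assms
proof (induction k)
  case (Suc k)
  then show ?case by (cases "i = Suc k") (auto simp: bind_eq_None_conv)
qed simp

lemma iter_range:
  assumes "\<psi> \<in> sym_inv n" "u \<in> {1..n}" "iter \<psi> k u = Some z"
  shows "z \<in> {1..n}"
proof (cases k)
  case (Suc j)
  then obtain a where "\<psi> a = Some z" using assms(3) by (cases "iter \<psi> j u") auto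
  then have "z \<in> ran \<psi>" by (auto simp: ran_def)
  then show ?thesis using assms(1) by (auto simp: sym_inv_def)
qed (use assms in auto)

lemma iter_cancel:
  assumes "\<psi> \<in> sym_inv n" "iter \<psi> (i + d) u = Some a" "iter \<psi> i u = Some a"
  shows "iter \<psi> d u = Some u"
  using assms(2,3)
proof (induction i arbitrary: a)
  case (Suc i)
  obtain b where b: "iter \<psi> i u = Some b" "\<psi> b = Some a"
    using Suc.prems(2) by (cases "iter \<psi> i u") auto
  obtain c where c: "iter \<psi> (i + d) u = Some c" "\<psi> c = Some a"
    using Suc.prems(1) by (cases "iter \<psi> (i + d) u") auto
  have "inj_on \<psi> (dom \<psi>)" using assms(1) by (auto simp: sym_inv_def)
  then have "b = c" using b(2) c(2) by (metis domI inj_onD)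
  then show ?case using Suc.IH b c by auto
qed simp

text \<open>Pigeonhole: a point of {1..n} surviving n iterations of an injective
  partial map lies on a cycle.\<close>

lemma long_orbit_periodic:
  assumes "\<psi> \<in> sym_inv n" "u \<in> {1..n}" "iter \<psi> n u \<noteq> None"
  shows "\<exists>p\<ge>1. iter \<psi> p u = Some u"
proof -
  define f where "f i = the (iter \<psi> i u)" for i
  have f_iter: "i \<le> n \<Longrightarrow> iter \<psi> i u = Some (f i)" for i
    using iter_prefix_defined[OF assms(3)] by (auto simp: f_def)
  have "f ` {0..n} \<subseteq> {1..n}"
    using f_iter iter_range[OF assms(1,2)] by fastforce
  then have "card (f ` {0..n}) \<le> n"
    by (metis card_atLeastAtMost card_mono diff_Suc_1 finite_atLeastAtMost)
  then have "\<not> inj_on f {0..n}"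
    using card_image by fastforce
  then obtain i j where "i \<in> {0..n}" "j \<in> {0..n}" "i \<noteq> j" "f i = f j"
    by (auto simp: inj_on_def)
  then obtain i j where ij: "i < j" "j \<le> n" "f i = f j"
    by (metis atLeastAtMost_iff linorder_neqE_nat)
  have "iter \<psi> (i + (j - i)) u = Some (f i)" using f_iter ij by auto
  then have "iter \<psi> (j - i) u = Some u"
    using iter_cancel[OF assms(1)] f_iter ij by fastforce
  then show ?thesis using ij by (intro exI[of _ "j - i"]) auto
qed

lemma iter_period_multiple: "iter \<psi> p u = Some u \<Longrightarrow> iter \<psi> (p * t) u = Some u"
proof (induction t)
  case (Suc t)
  have "iter \<psi> (p * Suc t) u = iter \<psi> (p * t + p) u" by (simp add: add.commute)
  also have "\<dots> = Some u" using Suc iter_add[of \<psi> "p * t" p u] by auto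
  finally show ?case .
qed simp

lemma long_orbit_returns:
  assumes "\<psi> \<in> sym_inv n" "u \<in> {1..n}" "iter \<psi> n u \<noteq> None"
  shows "\<exists>j. iter \<psi> (k + Suc j) u = Some u"
proof -
  obtain p where p: "p \<ge> 1" "iter \<psi> p u = Some u"
    using long_orbit_periodic[OF assms] by blast
  have "Suc k \<le> p * Suc k" using p(1) mult_le_mono1[of 1 p "Suc k"] by simp
  then have "k + Suc (p * Suc k - Suc k) = p * Suc k" by linarith
  then show ?thesis using iter_period_multiple[OF p(2)] by metis
qed

lemma arrows_stay_in_blocks:
  assumes S: "subsemigroup S" "S \<subseteq> sym_inv n"
    and "\<beta> \<in> S" "\<gamma> \<in> S"
    and uv: "pcomp (pw (pcomp \<beta> \<gamma>) n) \<beta> u = Some v"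
  shows "same_block S u v"
proof -
  define \<psi> where "\<psi> = pcomp \<beta> \<gamma>"
  have \<psi>S: "\<psi> \<in> S" using S(1) assms(3,4) by (auto simp: subsemigroup_def \<psi>_def)
  have \<psi>I: "\<psi> \<in> sym_inv n" using \<psi>S S(2) by auto
  obtain w where w: "iter \<psi> (Suc n) u = Some w" "\<beta> w = Some v"
    using uv by (auto simp: \<psi>_def pcomp_apply pw_iter bind_eq_Some_conv)
  have "iter \<psi> 1 u \<noteq> None" using iter_prefix_defined[of \<psi> "Suc n" u 1] w(1) by simp
  then have "u \<in> {1..n}" using \<psi>I by (auto simp: sym_inv_def)
  moreover have "iter \<psi> n u \<noteq> None" using iter_prefix_defined[of \<psi> "Suc n" u n] w(1) by simp
  ultimately obtain j where j: "iter \<psi> (Suc (Suc n) + Suc j) u = Some u"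
    using long_orbit_returns[OF \<psi>I] by blast
  have "\<gamma> v = iter \<psi> (Suc (Suc n)) u"
    using w by (simp add: \<psi>_def pcomp_apply)
  then have "pcomp \<gamma> (pw \<psi> j) v = Option.bind (iter \<psi> (Suc (Suc n)) u) (iter \<psi> (Suc j))"
    by (simp add: pcomp_apply pw_iter del: iter.simps)
  also have "\<dots> = Some u"
    using j by (simp only: iter_add)
  finally have "pcomp \<gamma> (pw \<psi> j) v = Some u" .
  moreover have "pcomp \<gamma> (pw \<psi> j) \<in> S"
    using pw_in[OF S(1) \<psi>S] assms(4) S(1) by (auto simp: subsemigroup_def)
  moreover have "pcomp (pw \<psi> n) \<beta> \<in> S"
    using pw_in[OF S(1) \<psi>S] assms(3) S(1) by (auto simp: subsemigroup_def)
  ultimately show ?thesis using uv by (auto simp: same_block_def reach_def \<psi>_def)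
qed

theorem lemma2p2:
  fixes n :: nat and S :: "(nat \<rightharpoonup> nat) set" and x y :: nat
  assumes "n \<ge> 2"
    and "S \<subseteq> sym_inv n - sym_grp n"
    and "subsemigroup S"
    and "semitransitive n S"
    and "finite S" and "card S \<le> 2 * n"
    and "x \<in> {1..n}" and "y \<in> {1..n}"
    and "same_block S x y"
  shows "\<exists>\<alpha>\<in>S. \<alpha> x = Some y \<and>
           (\<forall>u v. \<alpha> u = Some v \<longrightarrow> same_block S u v)"
proof -
  obtain \<beta> \<gamma> where \<beta>: "\<beta> \<in> S" "\<beta> x = Some y" and \<gamma>: "\<gamma> \<in> S" "\<gamma> y = Some x"
    using assms(9) by (auto simp: same_block_def reach_def)
  define \<alpha> where "\<alpha> = pcomp (pw (pcomp \<beta> \<gamma>) n) \<beta>"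
  have "\<alpha> \<in> S"
    using pw_in[OF assms(3)] \<beta>(1) \<gamma>(1) assms(3) by (auto simp: subsemigroup_def \<alpha>_def)
  moreover have "pcomp \<beta> \<gamma> x = Some x" using \<beta> \<gamma> by (simp add: pcomp_apply)
  then have "\<alpha> x = Some y"
    using \<beta>(2) by (simp add: \<alpha>_def pcomp_apply pw_iter iter_fixpoint del: iter.simps)
  moreover have "\<forall>u v. \<alpha> u = Some v \<longrightarrow> same_block S u v"
    using arrows_stay_in_blocks[OF assms(3) _ \<beta>(1) \<gamma>(1)] assms(2) by (auto simp: \<alpha>_def)
  ultimately show ?thesis by blast
qed

end
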